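(* Let $\mathcal{D}\subseteq\mathcal{M}^0_+$ be solid and suppose its closure satisfies $\overline{\mathcal{D}}=\mathcal{M}^0_+$. Then for every $\epsilon\in(0,1)$ there exists $\mu\in\mathcal{M}^0_+$ with $\mathbb{P}[\mathrm{d}\mu/\mathrm{d}\mathbb{P}=0]<\epsilon$ such that $a\mu\in\mathcal{D}$ for all $a\in\mathbb{R}_+$.
   Context: $(\Omega,\mathcal{F},\mathbb{P})$ is a probability space. $\mathcal{M}^0_+$ is the convex cone of all $\sigma$-finite nonnegative measures on $(\Omega,\mathcal{F})$ absolutely continuous with respect to $\mathbb{P}$, identified with $\mathbb{L}^0_+$ via $\mu\mapsto\mathrm{d}\mu/\mathrm{d}\mathbb{P}$ and equipped with the topology transported from the topology of convergence in probability on $\mathbb{L}^0_+$ (closure is taken in this topology). $\mathcal{D}\subseteq\mathcal{M}^0_+$ is solid if $\nu\in\mathcal{D}$, $\mu\in\mathcal{M}^0_+$ and $\mu\le\nu$ (i.e. $\mu[A]\le\nu[A]$ for all $A\in\mathcal{F}$) imply $\mu\in\mathcal{D}$. *)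

theory Defs
  imports "HOL-Probability.Probability"
begin

text \<open>The cone M^0_+ of nonnegative finite measures absolutely continuous w.r.t. P,
  identified with L^0_+ via Radon-Nikodym densities: nonnegative real-valued
  measurable functions on the sample space.\<close>
definition L0_plus :: "'a measure \<Rightarrow> ('a \<Rightarrow> real) set" where
  "L0_plus M = {f \<in> borel_measurable M. \<forall>x\<in>space M. 0 \<le> f x}"

definition conv_in_prob :: "'a measure \<Rightarrow> (nat \<Rightarrow> 'a \<Rightarrow> real) \<Rightarrow> ('a \<Rightarrow> real) \<Rightarrow> bool" where
  "conv_in_prob M X f \<longleftrightarrow>
     (\<forall>e>0. (\<lambda>n. measure M {x \<in> space M. e < \<bar>X n x - f x\<bar>}) \<longlonglongrightarrow> 0)"

text \<open>Solidity: \<mu> \<le> \<nu> setwise is equivalent to d\<mu>/dP \<le> d\<nu>/dP P-a.e.\<close>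
definition solid :: "'a measure \<Rightarrow> ('a \<Rightarrow> real) set \<Rightarrow> bool" where
  "solid M D \<longleftrightarrow> D \<subseteq> L0_plus M \<and>
     (\<forall>g\<in>D. \<forall>f\<in>L0_plus M. (AE x in M. f x \<le> g x) \<longrightarrow> f \<in> D)"

text \<open>Closure in L^0_+ w.r.t. convergence in probability (a metrizable topology,
  so the closure equals the sequential closure).\<close>
definition prob_closure :: "'a measure \<Rightarrow> ('a \<Rightarrow> real) set \<Rightarrow> ('a \<Rightarrow> real) set" where
  "prob_closure M D = {f \<in> L0_plus M. \<exists>X. (\<forall>n. X n \<in> D) \<and> conv_in_prob M X f}"

end

theory Submission
  imports Defs
begin

text \<open>Density of \<open>D\<close> yields \<open>g\<^sub>k \<in> D\<close> with \<open>P[g\<^sub>k < k] < \<epsilon>/4 \<cdot> 2\<^sup>-\<^sup>k\<close>. On the set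
  \<open>S = {\<forall>k. g\<^sub>k \<ge> k}\<close>, whose complement has probability at most \<open>\<epsilon>/2\<close>, every \<open>g\<^sub>k\<close>
  dominates \<open>k \<cdot> 1\<^sub>S\<close>, so by solidity \<open>a \<cdot> 1\<^sub>S \<in> D\<close> for every \<open>a \<ge> 0\<close>.\<close>

lemma solid_AE_le:
  assumes "solid M D" "g \<in> D" "f \<in> L0_plus M" "AE x in M. f x \<le> g x"
  shows "f \<in> D"
  using assms unfolding solid_def by blast

lemma solid_subset_L0_plus: "solid M D \<Longrightarrow> D \<subseteq> L0_plus M"
  unfolding solid_def by blast

lemma prob_closure_approx:
  assumes "f \<in> prob_closure M D" "0 < e" "0 < \<delta>"
  obtains g where "g \<in> D" "measure M {x \<in> space M. e < \<bar>g x - f x\<bar>} < \<delta>"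
proof -
  obtain X where X: "\<And>n. X n \<in> D" "conv_in_prob M X f"
    using assms(1) unfolding prob_closure_def by blast
  then have "(\<lambda>n. measure M {x \<in> space M. e < \<bar>X n x - f x\<bar>}) \<longlonglongrightarrow> 0"
    using assms(2) unfolding conv_in_prob_def by blast
  from LIMSEQ_D[OF this assms(3)] obtain n
    where "measure M {x \<in> space M. e < \<bar>X n x - f x\<bar>} < \<delta>"
    by fastforce
  with X(1) show thesis by (rule that)
qed

lemma dense_in_prob_exists_ge:
  assumes "finite_measure M" "D \<subseteq> L0_plus M" "prob_closure M D = L0_plus M"
    and "0 \<le> c" "0 < \<delta>"
  shows "\<exists>g\<in>D. measure M {x \<in> space M. g x < c} < \<delta>"
proof -
  have "(\<lambda>_. c + 1) \<in> prob_closure M D"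
    using assms(3,4) unfolding L0_plus_def by auto
  then obtain g where g: "g \<in> D" and small: "measure M {x \<in> space M. 1 < \<bar>g x - (c + 1)\<bar>} < \<delta>"
    by (rule prob_closure_approx[OF _ zero_less_one assms(5)])
  have "g \<in> borel_measurable M" using g assms(2) unfolding L0_plus_def by blast
  then have "{x \<in> space M. 1 < \<bar>g x - (c + 1)\<bar>} \<in> sets M" by measurable
  then have "measure M {x \<in> space M. g x < c} \<le> measure M {x \<in> space M. 1 < \<bar>g x - (c + 1)\<bar>}"
    by (intro finite_measure.finite_measure_mono[OF assms(1)]) auto
  with g small show ?thesis by (intro bexI[of _ g]) auto
qed

lemma (in finite_measure) measure_UN_le_suminf:
  assumes "range A \<subseteq> sets M" "\<And>k. measure M (A k) \<le> b k" "summable b"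
  shows "measure M (\<Union>k. A k) \<le> suminf b"
proof -
  have summable_A: "summable (\<lambda>k. measure M (A k))"
    by (rule summable_comparison_test[OF _ assms(3)]) (use assms(2) in auto)
  then have "measure M (\<Union>k. A k) \<le> (\<Sum>k. measure M (A k))"
    by (rule finite_measure_subadditive_countably[OF assms(1)])
  also have "\<dots> \<le> suminf b"
    by (rule suminf_le[OF assms(2) summable_A assms(3)])
  finally show ?thesis .
qed

lemma suminf_geometric_half: "(\<Sum>k. c * (1/2::real) ^ k) = 2 * c"
proof -
  have "summable (\<lambda>k. (1/2::real) ^ k)" by (rule summable_geometric) simp
  then have "(\<Sum>k. c * (1/2::real) ^ k) = c * (\<Sum>k. (1/2::real) ^ k)"
    by (rule suminf_mult)
  also have "(\<Sum>k. (1/2::real) ^ k) = 2" using suminf_geometric[of "1/2::real"] by simp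
  finally show ?thesis by simp
qed

lemma solid_scaled_indicator_in:
  assumes "solid M D" "\<And>k. g k \<in> D" "0 \<le> a"
  defines "S \<equiv> {x \<in> space M. \<forall>k. real k \<le> g k x}"
  shows "(\<lambda>x. a * indicator S x) \<in> D"
proof -
  have g_L0: "\<And>k. g k \<in> L0_plus M"
    using assms(2) solid_subset_L0_plus[OF assms(1)] by blast
  then have "\<And>k. g k \<in> borel_measurable M" unfolding L0_plus_def by blast
  then have "S \<in> sets M" unfolding S_def by measurable
  then have L0: "(\<lambda>x. a * indicator S x) \<in> L0_plus M"
    using assms(3) unfolding L0_plus_def by auto
  obtain k :: nat where k: "a \<le> real k" using real_arch_simple by blast
  have "a * indicator S x \<le> g k x" if "x \<in> space M" for x
  proof (cases "x \<in> S")
    case True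
    then have "real k \<le> g k x" unfolding S_def by blast
    with k show ?thesis using True by simp
  next
    case False
    then show ?thesis using that g_L0[of k] unfolding L0_plus_def by simp
  qed
  then show ?thesis
    by (intro solid_AE_le[OF assms(1) assms(2) L0] AE_I2)
qed

theorem lemmaA1:
  fixes M :: "'a measure" and D :: "('a \<Rightarrow> real) set" and \<epsilon> :: real
  assumes "prob_space M"
    and "solid M D"
    and "prob_closure M D = L0_plus M"
    and "0 < \<epsilon>" and "\<epsilon> < 1"
  shows "\<exists>f\<in>L0_plus M. measure M {x \<in> space M. f x = 0} < \<epsilon> \<and>
           (\<forall>a::real. 0 \<le> a \<longrightarrow> (\<lambda>x. a * f x) \<in> D)"
proof -
  interpret prob_space M by fact
  have DL: "D \<subseteq> L0_plus M" using assms(2) by (rule solid_subset_L0_plus)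
  have "\<forall>k::nat. \<exists>g\<in>D. measure M {x \<in> space M. g x < real k} < \<epsilon>/4 * (1/2)^k"
    by (intro allI dense_in_prob_exists_ge[OF finite_measure_axioms DL assms(3)])
      (use assms(4) in auto)
  then obtain g where g: "\<And>k. g k \<in> D"
    and small: "\<And>k. measure M {x \<in> space M. g k x < real k} < \<epsilon>/4 * (1/2)^k"
    by metis
  define S where "S = {x \<in> space M. \<forall>k. real k \<le> g k x}"
  have g_meas: "\<And>k. g k \<in> borel_measurable M" using g DL unfolding L0_plus_def by blast
  then have "S \<in> sets M" unfolding S_def by measurable
  then have f_L0: "indicator S \<in> L0_plus M" unfolding L0_plus_def by auto
  have "{x \<in> space M. indicator S x = (0::real)} = (\<Union>k. {x \<in> space M. g k x < real k})"
    unfolding S_def by (auto simp: indicator_def not_le)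
  also have "measure M \<dots> \<le> (\<Sum>k. \<epsilon>/4 * (1/2)^k)"
    using g_meas small by (intro measure_UN_le_suminf) (auto intro: less_imp_le)
  also have "\<dots> < \<epsilon>" using suminf_geometric_half[of "\<epsilon>/4"] assms(4) by simp
  finally have "measure M {x \<in> space M. indicator S x = (0::real)} < \<epsilon>" .
  moreover have "(\<lambda>x. a * indicator S x) \<in> D" if "0 \<le> a" for a
    unfolding S_def by (rule solid_scaled_indicator_in[OF assms(2) g that])
  ultimately show ?thesis using f_L0 by blast
qed

end
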